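(* Let $\mathcal{D}',\mathcal{D}''$ be two inputs of $\mathsf{SGDsub}$ that differ only in the user $Z_{1,1}$, run from the same initial point with the same parameters, step size $\eta$, and threshold $\varsigma=1/\tau$ in $\mathsf{RobustEst}$. Suppose $6\beta\eta B\le1$ and $(\mathcal{D}',\mathcal{D}'')$ is $(1/\tau)$-aligned. Then $|s_t(\mathcal{D}',\tau)-s_t(\mathcal{D}'',\tau)|\le 2$ for all $t\ge2$.
   Context: $\mathcal{X}\subset\mathbb{R}^d$ is an $\ell_\infty$-ball with Euclidean projection $\Pi_{\mathcal{X}}$. Each $f(\cdot;z)$ is convex, $\beta$-smooth ($\|\nabla^2 f(x;z)\|_\infty\le\beta$, $\|A\|_\infty=\max_i\sum_j|A_{ij}|$) with diagonally dominant Hessian ($|A_{ii}|\ge\sum_{j\ne i}|A_{ij}|$). Robust statistic: a coordinatewise map $(X_1,\dots,X_B)\mapsto X_{\mathrm{rs}}$ with (i) if more than $B/2$ of the $X_i$ lie in $B_\infty(X',\rho)$ then $X_{\mathrm{rs}}\in B_\infty(X',\rho)$; (ii) if $\|Y_i-X_i\|_\infty\le\Delta$ for all $i$ then $\|X_{\mathrm{rs}}-Y_{\mathrm{rs}}\|_\infty\le\Delta$; (iii) $(aX_i+b)_{\mathrm{rs}}=aX_{\mathrm{rs}}+b$. $\mathsf{RobustEst}(X_1,\dots,X_B;\varsigma)$: coordinatewise, output the projection of the mean $\bar x[j]$ onto $[X_{\mathrm{rs}}[j]-\varsigma,X_{\mathrm{rs}}[j]+\varsigma]$ if $|X_{\mathrm{rs}}[j]-\bar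 x[j]|\ge\varsigma$, else $\bar x[j]$. $\mathsf{SGDsub}$: users (sets of $m$ points) split into groups $\{Z_{i,t}\}_{t\in[T]}$, $i\in[B]$; $q_t(Z_{i,t})=\frac1m\sum_{z\in Z_{i,t}}\nabla f(x_{t-1};z)$, $g_{t-1}=\mathsf{RobustEst}(q_t(Z_{1,t}),\dots,q_t(Z_{B,t});\varsigma)$, $x_t=\Pi_{\mathcal{X}}(x_{t-1}-\eta g_{t-1})$. $s_t(\mathcal{D}',\tau)=\frac1B\sum_{i,j\in[B]}\exp(-\tau\|q_t(Z_{i,t})-q_t(Z_{j,t})\|_\infty)$, and $s_t(\mathcal{D}'',\tau)$ is the same with $q'_t$ computed along the trajectory $y_t$ of $\mathcal{D}''$. The pair is $\rho$-aligned if there are $X',Y'$ such that at least $2B/3$ of $q_1(Z_{i,1})$ lie in $B_\infty(X',\rho)$ and at least $2B/3$ of $q'_1(Z'_{i,1})$ lie in $B_\infty(Y',\rho)$. *)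

theory Defs
  imports "HOL-Analysis.Analysis"
begin

definition linf_ball :: "real ^ 'd \<Rightarrow> real \<Rightarrow> (real ^ 'd) set" where
  "linf_ball c r = {y. infnorm (y - c) \<le> r}"

definition mat_inf_norm :: "real ^ 'd ^ 'd \<Rightarrow> real" where
  "mat_inf_norm A = Max (range (\<lambda>i. \<Sum>j\<in>UNIV. \<bar>A $ i $ j\<bar>))"

definition diag_dominant :: "real ^ 'd ^ 'd \<Rightarrow> bool" where
  "diag_dominant A \<longleftrightarrow> (\<forall>i. \<bar>A $ i $ i\<bar> \<ge> (\<Sum>j\<in>UNIV - {i}. \<bar>A $ i $ j\<bar>))"

definition robust_statistic :: "nat \<Rightarrow> ((nat \<Rightarrow> real ^ 'd) \<Rightarrow> real ^ 'd) \<Rightarrow> bool" where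
  "robust_statistic B rs \<longleftrightarrow>
     (\<forall>X Y j. (\<forall>i\<in>{1..B}. X i $ j = Y i $ j) \<longrightarrow> rs X $ j = rs Y $ j) \<and>
     (\<forall>X X' \<rho>. real (card {i\<in>{1..B}. X i \<in> linf_ball X' \<rho>}) > real B / 2
                \<longrightarrow> rs X \<in> linf_ball X' \<rho>) \<and>
     (\<forall>X Y \<Delta>. (\<forall>i\<in>{1..B}. infnorm (Y i - X i) \<le> \<Delta>) \<longrightarrow> infnorm (rs X - rs Y) \<le> \<Delta>) \<and>
     (\<forall>X (a::real) b. rs (\<lambda>i. a *\<^sub>R X i + b) = a *\<^sub>R rs X + b)"

definition robust_est :: "nat \<Rightarrow> ((nat \<Rightarrow> real ^ 'd) \<Rightarrow> real ^ 'd) \<Rightarrow> (nat \<Rightarrow> real ^ 'd) \<Rightarrow> real \<Rightarrow> real ^ 'd" where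
  "robust_est B rs X \<sigma> =
     (\<chi> j. let xbar = ((1 / real B) *\<^sub>R (\<Sum>i\<in>{1..B}. X i)) $ j; xr = rs X $ j
           in if \<bar>xr - xbar\<bar> \<ge> \<sigma> then max (xr - \<sigma>) (min (xr + \<sigma>) xbar) else xbar)"

text \<open>q(x, user) = (1/m) sum over the m points of the user of grad f(x; z).
  A user is represented as an indexed family of m data points (k = 0..m-1).\<close>
definition qgrad :: "(real ^ 'd \<Rightarrow> 'z \<Rightarrow> real ^ 'd) \<Rightarrow> nat \<Rightarrow> real ^ 'd \<Rightarrow> (nat \<Rightarrow> 'z) \<Rightarrow> real ^ 'd" where
  "qgrad gradf m x U = (1 / real m) *\<^sub>R (\<Sum>k<m. gradf x (U k))"

text \<open>Trajectory of SGDsub: Z i t is user Z_{i,t}; x_0 = x0;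
  x_t = Pi_X (x_{t-1} - eta g_{t-1}), g_{t-1} = RobustEst(q_t(Z_{1,t}),...,q_t(Z_{B,t}); varsigma).\<close>
fun sgd_traj :: "(real ^ 'd \<Rightarrow> 'z \<Rightarrow> real ^ 'd) \<Rightarrow> nat \<Rightarrow> nat \<Rightarrow> ((nat \<Rightarrow> real ^ 'd) \<Rightarrow> real ^ 'd)
     \<Rightarrow> (real ^ 'd) set \<Rightarrow> real \<Rightarrow> real \<Rightarrow> real ^ 'd \<Rightarrow> (nat \<Rightarrow> nat \<Rightarrow> nat \<Rightarrow> 'z) \<Rightarrow> nat \<Rightarrow> real ^ 'd" where
  "sgd_traj gradf m B rs Xdom \<eta> \<sigma> x0 Z 0 = x0"
| "sgd_traj gradf m B rs Xdom \<eta> \<sigma> x0 Z (Suc t) =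
     (let x = sgd_traj gradf m B rs Xdom \<eta> \<sigma> x0 Z t
      in closest_point Xdom (x - \<eta> *\<^sub>R robust_est B rs (\<lambda>i. qgrad gradf m x (Z i (Suc t))) \<sigma>))"

definition s_stat :: "(real ^ 'd \<Rightarrow> 'z \<Rightarrow> real ^ 'd) \<Rightarrow> nat \<Rightarrow> nat \<Rightarrow> ((nat \<Rightarrow> real ^ 'd) \<Rightarrow> real ^ 'd)
     \<Rightarrow> (real ^ 'd) set \<Rightarrow> real \<Rightarrow> real \<Rightarrow> real ^ 'd \<Rightarrow> (nat \<Rightarrow> nat \<Rightarrow> nat \<Rightarrow> 'z) \<Rightarrow> nat \<Rightarrow> real \<Rightarrow> real" where
  "s_stat gradf m B rs Xdom \<eta> \<sigma> x0 Z t \<tau> =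
     (let x = sgd_traj gradf m B rs Xdom \<eta> \<sigma> x0 Z (t - 1)
      in (1 / real B) * (\<Sum>i\<in>{1..B}. \<Sum>j\<in>{1..B}.
            exp (- \<tau> * infnorm (qgrad gradf m x (Z i t) - qgrad gradf m x (Z j t)))))"

end

theory Submission
  imports Defs
begin

(* The two runs see different data only in the first round. There both families of user
   gradients are 2B/3-concentrated, so for B >= 4 some user k ~= 1 lies in both concentration
   balls; by property (i) each robust statistic lies in the same ball as that user's gradient, so
   the two statistics are 4/tau apart, the clipped estimates 6/tau apart, and the first iterates
   6 eta/tau apart in l-infinity.

   From then on the inputs coincide, and every SGDsub step is nonexpansive in l-infinity: a convex
   function has a Hessian with nonnegative diagonal, so diagonal dominance and eta beta <= 1 make
   I - eta H nonexpansive; RobustEst commutes with the affine map v - eta (.), and both of its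
   ingredients (mean and robust statistic) are nonexpansive; the projection onto the box is
   coordinatewise clipping. So at round t the user gradients of the two runs differ by at most
   6 beta eta/tau, each of the B^2 terms of s_t by at most 12 beta eta, and s_t by
   12 beta eta B <= 2. For B <= 3 the claim holds since s_t always lies in [1, B]. *)

lemma infnorm_le_iff_cart: "infnorm (v :: real ^ 'n) \<le> D \<longleftrightarrow> (\<forall>j. \<bar>v $ j\<bar> \<le> D)"
proof
  assume "\<forall>j. \<bar>v $ j\<bar> \<le> D"
  then show "infnorm v \<le> D"
    unfolding infnorm_cart by (intro cSup_least) auto
qed (meson component_le_infnorm_cart order_trans)

lemma convex_on_hessian_psd:
  fixes f :: "real ^ 'n \<Rightarrow> real" and g :: "real ^ 'n \<Rightarrow> real ^ 'n"
    and H :: "real ^ 'n \<Rightarrow> real ^ 'n ^ 'n"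
  assumes grad: "\<And>x. (f has_derivative (\<lambda>h. g x \<bullet> h)) (at x)"
    and hess: "\<And>x. (g has_derivative (\<lambda>h. H x *v h)) (at x)"
    and cvx: "convex_on UNIV f"
  shows "0 \<le> (H x *v e) \<bullet> e"
proof -
  define \<phi> where "\<phi> s = f (x + s *\<^sub>R e)" for s
  define \<psi> where "\<psi> s = g (x + s *\<^sub>R e) \<bullet> e" for s
  have line: "((\<lambda>s. x + s *\<^sub>R e) has_derivative (\<lambda>h. h *\<^sub>R e)) (at s)" for s
    by (auto intro!: derivative_eq_intros)
  have \<phi>_deriv: "(\<phi> has_real_derivative \<psi> s) (at s)" for s
    unfolding \<phi>_def \<psi>_def
    by (rule has_derivative_imp_has_field_derivative[OF has_derivative_compose[OF line grad]])
      simp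
  have \<phi>_convex: "convex_on UNIV \<phi>"
  proof (rule convex_onI)
    fix t a b :: real assume "0 < t" "t < 1"
    moreover have "x + ((1 - t) * a + t * b) *\<^sub>R e
        = (1 - t) *\<^sub>R (x + a *\<^sub>R e) + t *\<^sub>R (x + b *\<^sub>R e)"
      by (simp add: algebra_simps)
    ultimately show "\<phi> ((1 - t) *\<^sub>R a + t *\<^sub>R b) \<le> (1 - t) * \<phi> a + t * \<phi> b"
      unfolding \<phi>_def using convex_onD[OF cvx, of t] by simp
  qed simp
  have "mono_on UNIV \<psi>"
  proof (rule mono_onI)
    fix a b :: real assume "a \<le> b"
    have "\<phi> b - \<phi> a \<ge> \<psi> a * (b - a)" "\<phi> a - \<phi> b \<ge> \<psi> b * (a - b)"
      by (auto intro!: convex_on_imp_above_tangent[OF \<phi>_convex]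
          has_field_derivative_at_within \<phi>_deriv)
    then have "0 \<le> (\<psi> b - \<psi> a) * (b - a)" by (simp add: algebra_simps)
    with \<open>a \<le> b\<close> show "\<psi> a \<le> \<psi> b"
      by (cases "a = b") (auto simp: zero_le_mult_iff)
  qed
  moreover have "(\<psi> has_real_derivative (H x *v e) \<bullet> e) (at 0)"
  proof -
    have "((\<lambda>s. g (x + s *\<^sub>R e)) has_derivative (\<lambda>h. H (x + 0 *\<^sub>R e) *v (h *\<^sub>R e))) (at 0)"
      by (rule has_derivative_compose[OF line hess])
    then have "(\<psi> has_derivative (\<lambda>h. (H x *v (h *\<^sub>R e)) \<bullet> e)) (at 0)"
      unfolding \<psi>_def by (auto intro: has_derivative_inner_left)
    then show ?thesis
      by (rule has_derivative_imp_has_field_derivative) (simp add: matrix_vector_mult_scaleR)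
  qed
  ultimately show ?thesis by (rule mono_on_imp_deriv_nonneg) simp
qed

lemma differentiable_bound_infnorm_cart:
  fixes g :: "real ^ 'n \<Rightarrow> real ^ 'm"
  assumes deriv: "\<And>p. (g has_derivative D p) (at p)"
    and bound: "\<And>p. infnorm (D p (y - x)) \<le> L"
  shows "infnorm (g y - g x) \<le> L"
  unfolding infnorm_le_iff_cart
proof
  fix k
  define \<psi> where "\<psi> s = g (x + s *\<^sub>R (y - x)) $ k" for s
  have line: "((\<lambda>s. x + s *\<^sub>R (y - x)) has_derivative (\<lambda>h. h *\<^sub>R (y - x))) (at s)" for s
    by (auto intro!: derivative_eq_intros)
  have \<psi>_deriv: "(\<psi> has_real_derivative D (x + s *\<^sub>R (y - x)) (y - x) $ k) (at s)" for s
  proof -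
    have "(\<psi> has_derivative (\<lambda>h. D (x + s *\<^sub>R (y - x)) (h *\<^sub>R (y - x)) $ k)) (at s)"
      unfolding \<psi>_def
      by (rule bounded_linear.has_derivative[OF bounded_linear_vec_nth
            has_derivative_compose[OF line deriv]])
    moreover have "linear (D (x + s *\<^sub>R (y - x)))"
      using deriv has_derivative_linear by blast
    ultimately show ?thesis
      by (intro has_derivative_imp_has_field_derivative) (auto simp: linear_scale mult.commute)
  qed
  then obtain s where "\<psi> 1 - \<psi> 0 = (1 - 0) * D (x + s *\<^sub>R (y - x)) (y - x) $ k"
    using MVT2[of 0 1 \<psi>, OF _ \<psi>_deriv] by auto
  then show "\<bar>(g y - g x) $ k\<bar> \<le> L"
    using order_trans[OF component_le_infnorm_cart bound] unfolding \<psi>_def by simp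
qed

lemma infnorm_matrix_vector_mult_le: "infnorm (H *v v) \<le> mat_inf_norm H * infnorm v"
  unfolding infnorm_le_iff_cart
proof
  fix k
  have "\<bar>(H *v v) $ k\<bar> \<le> (\<Sum>j\<in>UNIV. \<bar>H $ k $ j\<bar> * infnorm v)"
    unfolding matrix_vector_mult_def
    by (auto intro!: order_trans[OF sum_abs] sum_mono mult_left_mono component_le_infnorm_cart
        simp: abs_mult)
  also have "\<dots> \<le> mat_inf_norm H * infnorm v"
    unfolding mat_inf_norm_def sum_distrib_right[symmetric]
    by (intro mult_right_mono Max_ge) (auto simp: infnorm_pos_le)
  finally show "\<bar>(H *v v) $ k\<bar> \<le> mat_inf_norm H * infnorm v" .
qed

lemma diag_le_mat_inf_norm: "\<bar>H $ k $ k\<bar> \<le> mat_inf_norm H"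
proof -
  have "\<bar>H $ k $ k\<bar> \<le> (\<Sum>j\<in>UNIV. \<bar>H $ k $ j\<bar>)"
    by (rule member_le_sum) auto
  also have "\<dots> \<le> mat_inf_norm H"
    unfolding mat_inf_norm_def by (intro Max_ge) auto
  finally show ?thesis .
qed

text \<open>With a nonnegative diagonal, diagonal dominance makes each row of \<open>I - \<eta> H\<close> have
  absolute row sum \<open>(1 - \<eta> H\<^sub>k\<^sub>k) + \<eta> \<Sum>\<^sub>j\<^sub>\<noteq>\<^sub>k |H\<^sub>k\<^sub>j| \<le> 1\<close>.\<close>
lemma diag_dominant_step_infnorm_le:
  assumes "0 \<le> \<eta>" "\<eta> * mat_inf_norm H \<le> 1" "diag_dominant H" "\<And>k. 0 \<le> H $ k $ k"
  shows "infnorm (v - \<eta> *\<^sub>R (H *v v)) \<le> infnorm v"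
  unfolding infnorm_le_iff_cart
proof
  fix k
  define S where "S = (\<Sum>j\<in>UNIV - {k}. H $ k $ j * v $ j)"
  have Hv: "(H *v v) $ k = H $ k $ k * v $ k + S"
    unfolding matrix_vector_mult_def S_def by (simp add: sum.remove[of UNIV k])
  have "\<bar>S\<bar> \<le> (\<Sum>j\<in>UNIV - {k}. \<bar>H $ k $ j\<bar>) * infnorm v"
    unfolding S_def sum_distrib_right
    by (auto intro!: order_trans[OF sum_abs] sum_mono mult_left_mono component_le_infnorm_cart
        simp: abs_mult)
  also have "\<dots> \<le> H $ k $ k * infnorm v"
    using assms(3,4) unfolding diag_dominant_def
    by (intro mult_right_mono) (auto simp: infnorm_pos_le)
  finally have S: "\<bar>S\<bar> \<le> H $ k $ k * infnorm v" .
  have \<eta>H: "\<eta> * H $ k $ k \<le> 1"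
    using diag_le_mat_inf_norm[of H k] assms(1,2,4) by (smt (verit) mult_left_mono)
  have "\<bar>(v - \<eta> *\<^sub>R (H *v v)) $ k\<bar> = \<bar>(1 - \<eta> * H $ k $ k) * v $ k - \<eta> * S\<bar>"
    by (simp add: Hv algebra_simps)
  also have "\<dots> \<le> (1 - \<eta> * H $ k $ k) * \<bar>v $ k\<bar> + \<eta> * \<bar>S\<bar>"
    using \<eta>H assms(1) by (simp add: abs_mult order_trans[OF abs_triangle_ineq4])
  also have "\<dots> \<le> (1 - \<eta> * H $ k $ k) * infnorm v + \<eta> * (H $ k $ k * infnorm v)"
    using \<eta>H assms(1) S by (intro add_mono mult_left_mono component_le_infnorm_cart) auto
  also have "\<dots> = infnorm v"
    by (simp add: algebra_simps)
  finally show "\<bar>(v - \<eta> *\<^sub>R (H *v v)) $ k\<bar> \<le> infnorm v" .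
qed

lemma gradient_lipschitz_infnorm:
  fixes g :: "real ^ 'n \<Rightarrow> real ^ 'n"
  assumes "\<And>x. (g has_derivative (\<lambda>h. H x *v h)) (at x)"
    and "\<And>x. mat_inf_norm (H x) \<le> \<beta>"
  shows "infnorm (g y - g x) \<le> \<beta> * infnorm (y - x)"
proof (rule differentiable_bound_infnorm_cart[where g = g and D = "\<lambda>p h. H p *v h"])
  show "infnorm (H p *v (y - x)) \<le> \<beta> * infnorm (y - x)" for p
    using assms(2)[of p]
    by (intro order_trans[OF infnorm_matrix_vector_mult_le] mult_right_mono infnorm_pos_le)
qed (rule assms(1))

lemma gradient_step_infnorm_le:
  fixes f :: "real ^ 'n \<Rightarrow> real" and g :: "real ^ 'n \<Rightarrow> real ^ 'n"
  assumes grad: "\<And>x. (f has_derivative (\<lambda>h. g x \<bullet> h)) (at x)"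
    and hess: "\<And>x. (g has_derivative (\<lambda>h. H x *v h)) (at x)"
    and cvx: "convex_on UNIV f"
    and smooth: "\<And>x. mat_inf_norm (H x) \<le> \<beta>"
    and diagdom: "\<And>x. diag_dominant (H x)"
    and \<eta>: "0 \<le> \<eta>" "\<eta> * \<beta> \<le> 1"
  shows "infnorm ((y - \<eta> *\<^sub>R g y) - (x - \<eta> *\<^sub>R g x)) \<le> infnorm (y - x)"
proof (rule differentiable_bound_infnorm_cart[where g = "\<lambda>p. p - \<eta> *\<^sub>R g p"
      and D = "\<lambda>p h. h - \<eta> *\<^sub>R (H p *v h)"])
  show "((\<lambda>p. p - \<eta> *\<^sub>R g p) has_derivative (\<lambda>h. h - \<eta> *\<^sub>R (H p *v h))) (at p)" for p
    by (intro has_derivative_diff has_derivative_ident has_derivative_scaleR_right hess)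
  have diag_nonneg: "0 \<le> H p $ k $ k" for p k
    using convex_on_hessian_psd[OF grad hess cvx, of p "axis k 1"]
    by (simp add: matrix_vector_mult_basis inner_axis column_def)
  show "infnorm ((y - x) - \<eta> *\<^sub>R (H p *v (y - x))) \<le> infnorm (y - x)" for p
    using \<eta> smooth[of p] diagdom diag_nonneg
    by (intro diag_dominant_step_infnorm_le) (auto intro: order_trans[OF mult_left_mono])
qed

lemma infnorm_mean_le:
  fixes v :: "'i \<Rightarrow> real ^ 'n"
  assumes "finite I" "I \<noteq> {}" "\<And>i. i \<in> I \<Longrightarrow> infnorm (v i) \<le> D"
  shows "infnorm ((1 / real (card I)) *\<^sub>R (\<Sum>i\<in>I. v i)) \<le> D"
  unfolding infnorm_le_iff_cart
proof
  fix j
  have "\<bar>\<Sum>i\<in>I. v i $ j\<bar> \<le> (\<Sum>i\<in>I. \<bar>v i $ j\<bar>)"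
    by (rule sum_abs)
  also have "\<dots> \<le> (\<Sum>i\<in>I. D)"
    by (intro sum_mono order_trans[OF component_le_infnorm_cart assms(3)])
  finally have "\<bar>\<Sum>i\<in>I. v i $ j\<bar> \<le> real (card I) * D"
    by simp
  then show "\<bar>((1 / real (card I)) *\<^sub>R (\<Sum>i\<in>I. v i)) $ j\<bar> \<le> D"
    using assms(1,2) by (simp add: sum_component abs_mult card_gt_0_iff field_simps)
qed

definition clip :: "real \<Rightarrow> real \<Rightarrow> real \<Rightarrow> real" where
  "clip r s u = max (r - s) (min (r + s) u)"

lemma clip_lipschitz:
  assumes "0 \<le> s" "\<bar>r - r'\<bar> \<le> D" "\<bar>u - u'\<bar> \<le> D"
  shows "\<bar>clip r s u - clip r' s u'\<bar> \<le> D"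
  using assms by (simp add: clip_def max_def min_def abs_le_iff)

lemma clip_dist_le:
  assumes "0 \<le> s"
  shows "\<bar>clip r s u - clip r' s u'\<bar> \<le> \<bar>r - r'\<bar> + 2 * s"
proof -
  have "r - s \<le> clip r s u" "clip r s u \<le> r + s" "r' - s \<le> clip r' s u'" "clip r' s u' \<le> r' + s"
    using assms by (auto simp: clip_def)
  then show ?thesis
    unfolding abs_le_iff using abs_ge_self[of "r - r'"] abs_ge_minus_self[of "r - r'"] by linarith
qed

lemma diff_mult_clip:
  assumes "0 \<le> \<eta>" "0 \<le> s"
  shows "a - \<eta> * clip r s u = clip (a - \<eta> * r) (\<eta> * s) (a - \<eta> * u)"
proof -
  have "\<eta> * clip r s u = max (\<eta> * r - \<eta> * s) (min (\<eta> * r + \<eta> * s) (\<eta> * u))"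
    using assms(1) by (simp add: clip_def max_mult_distrib_left min_mult_distrib_left algebra_simps)
  moreover have "a - max p (min q v) = max (a - q) (min (a - p) (a - v))" if "p \<le> q"
    for p q v :: real
    using that by (auto simp: max_def min_def)
  ultimately show ?thesis
    using mult_nonneg_nonneg[OF assms] by (simp add: clip_def algebra_simps)
qed

lemma closest_point_linf_ball:
  assumes "0 \<le> r"
  shows "closest_point (linf_ball c r) v = (\<chi> j. clip (c $ j) r (v $ j))"
proof (rule closest_point_unique[symmetric])
  have box: "linf_ball c r = cbox (c - (\<chi> j. r)) (c + (\<chi> j. r))"
    by (auto simp: linf_ball_def infnorm_le_iff_cart mem_box_cart abs_le_iff algebra_simps)
  show "convex (linf_ball c r)" "closed (linf_ball c r)"
    by (simp_all add: box convex_box closed_cbox)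
  show "(\<chi> j. clip (c $ j) r (v $ j)) \<in> linf_ball c r"
    using assms by (auto simp: linf_ball_def infnorm_le_iff_cart clip_def)
  show "\<forall>z\<in>linf_ball c r. dist v (\<chi> j. clip (c $ j) r (v $ j)) \<le> dist v z"
  proof
    fix z assume "z \<in> linf_ball c r"
    then have "\<bar>v $ j - clip (c $ j) r (v $ j)\<bar> \<le> \<bar>v $ j - z $ j\<bar>" for j
      using component_le_infnorm_cart[of "z - c" j] by (auto simp: linf_ball_def clip_def)
    then show "dist v (\<chi> j. clip (c $ j) r (v $ j)) \<le> dist v z"
      unfolding dist_norm norm_le inner_vec_def
      by (intro sum_mono) (simp add: abs_le_square_iff power2_eq_square)
  qed
qed

lemma closest_point_linf_ball_infnorm_le:
  assumes "0 \<le> r"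
  shows "infnorm (closest_point (linf_ball c r) v - closest_point (linf_ball c r) w)
    \<le> infnorm (v - w)"
  unfolding infnorm_le_iff_cart closest_point_linf_ball[OF assms]
  using assms component_le_infnorm_cart[of "v - w"]
  by (auto intro!: clip_lipschitz simp: infnorm_pos_le)

lemma robust_statistic_majority:
  assumes "robust_statistic B rs" "real B / 2 < real (card {i\<in>{1..B}. X i \<in> linf_ball X' \<rho>})"
  shows "rs X \<in> linf_ball X' \<rho>"
  using assms unfolding robust_statistic_def by blast

lemma robust_statistic_infnorm_le:
  assumes "robust_statistic B rs" "\<And>i. i \<in> {1..B} \<Longrightarrow> infnorm (Y i - X i) \<le> \<Delta>"
  shows "infnorm (rs X - rs Y) \<le> \<Delta>"
  using assms unfolding robust_statistic_def by blast

lemma robust_statistic_affine: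
  assumes "robust_statistic B rs"
  shows "rs (\<lambda>i. a *\<^sub>R X i + b) = a *\<^sub>R rs X + b"
  using assms unfolding robust_statistic_def by blast

lemma robust_est_component:
  assumes "0 \<le> \<sigma>"
  shows "robust_est B rs X \<sigma> $ j = clip (rs X $ j) \<sigma> (((1 / real B) *\<^sub>R (\<Sum>i\<in>{1..B}. X i)) $ j)"
  using assms by (auto simp: robust_est_def clip_def Let_def)

lemma robust_est_dist_le:
  assumes "0 \<le> \<sigma>"
  shows "infnorm (robust_est B rs X \<sigma> - robust_est B rs Y \<sigma>) \<le> infnorm (rs X - rs Y) + 2 * \<sigma>"
  unfolding infnorm_le_iff_cart vector_minus_component robust_est_component[OF assms]
  using assms component_le_infnorm_cart[of "rs X - rs Y"]
  by (auto intro: order_trans[OF clip_dist_le])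

text \<open>The step \<open>x - \<eta> RobustEst(X)\<close> clips the mean of the points \<open>x - \<eta> X\<^sub>i\<close> to the
  \<open>\<eta> \<sigma>\<close>-interval around their robust statistic (affine equivariance), and both the mean and the
  robust statistic are nonexpansive in these points.\<close>
lemma robust_est_step_infnorm_le:
  fixes x y :: "real ^ 'n"
  assumes rs: "robust_statistic B rs" and B: "1 \<le> B" and "0 \<le> \<eta>" "0 \<le> \<sigma>"
    and close: "\<And>i. i \<in> {1..B} \<Longrightarrow> infnorm ((y - \<eta> *\<^sub>R Y i) - (x - \<eta> *\<^sub>R X i)) \<le> D"
  shows "infnorm ((y - \<eta> *\<^sub>R robust_est B rs Y \<sigma>) - (x - \<eta> *\<^sub>R robust_est B rs X \<sigma>)) \<le> D"
  unfolding infnorm_le_iff_cart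
proof
  fix j
  define mean :: "(nat \<Rightarrow> real ^ 'n) \<Rightarrow> real ^ 'n"
    where "mean V = (1 / real B) *\<^sub>R (\<Sum>i\<in>{1..B}. V i)" for V
  define u where "u = (\<lambda>i. x - \<eta> *\<^sub>R X i)"
  define w where "w = (\<lambda>i. y - \<eta> *\<^sub>R Y i)"
  have step: "v $ j - \<eta> * robust_est B rs V \<sigma> $ j
      = clip (rs (\<lambda>i. v - \<eta> *\<^sub>R V i) $ j) (\<eta> * \<sigma>) (mean (\<lambda>i. v - \<eta> *\<^sub>R V i) $ j)"
    for V and v :: "real ^ 'n"
  proof -
    have "rs (\<lambda>i. v - \<eta> *\<^sub>R V i) = v - \<eta> *\<^sub>R rs V"
      using robust_statistic_affine[OF rs, of "- \<eta>" V v] by (simp add: algebra_simps)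
    moreover have "mean (\<lambda>i. v - \<eta> *\<^sub>R V i) $ j = v $ j - \<eta> * mean V $ j"
    proof -
      have "(\<Sum>i\<in>{1..B}. (v - \<eta> *\<^sub>R V i) $ j) = real B * v $ j - \<eta> * (\<Sum>i\<in>{1..B}. V i $ j)"
        by (simp add: sum_subtractf sum_distrib_left)
      then show ?thesis
        using B by (simp add: mean_def sum_component right_diff_distrib)
    qed
    ultimately show ?thesis
      unfolding robust_est_component[OF \<open>0 \<le> \<sigma>\<close>] mean_def[symmetric]
        diff_mult_clip[OF \<open>0 \<le> \<eta>\<close> \<open>0 \<le> \<sigma>\<close>]
      by simp
  qed
  have uw: "infnorm (w i - u i) \<le> D" if "i \<in> {1..B}" for i
    using close[OF that] by (simp add: u_def w_def)
  have "infnorm (rs u - rs w) \<le> D"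
    by (rule robust_statistic_infnorm_le[OF rs]) (rule uw)
  then have "\<bar>rs w $ j - rs u $ j\<bar> \<le> D"
    using component_le_infnorm_cart[of "rs u - rs w" j] by simp
  moreover have "\<bar>mean w $ j - mean u $ j\<bar> \<le> D"
  proof -
    have "infnorm (mean w - mean u) \<le> D"
      using infnorm_mean_le[of "{1..B}" "\<lambda>i. w i - u i" D] B uw
      by (simp add: mean_def sum_subtractf scaleR_diff_right)
    then show ?thesis
      using component_le_infnorm_cart[of "mean w - mean u" j] by simp
  qed
  ultimately show "\<bar>((y - \<eta> *\<^sub>R robust_est B rs Y \<sigma>) - (x - \<eta> *\<^sub>R robust_est B rs X \<sigma>)) $ j\<bar> \<le> D"
    using \<open>0 \<le> \<eta>\<close> \<open>0 \<le> \<sigma>\<close> step[of y Y] step[of x X] unfolding u_def[symmetric] w_def[symmetric]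
    by (simp add: clip_lipschitz)
qed

lemma exists_common_element_except:
  assumes "finite A" "S \<subseteq> A" "S' \<subseteq> A" "card A + 1 < card S + card S'"
  shows "\<exists>k\<in>S \<inter> S'. k \<noteq> a"
proof (rule ccontr)
  assume "\<not> ?thesis"
  then have "card (S \<inter> S') \<le> card {a}"
    by (intro card_mono) auto
  moreover have "card (S \<union> S') \<le> card A"
    using assms by (intro card_mono) auto
  moreover have "card S + card S' = card (S \<union> S') + card (S \<inter> S')"
    using assms by (intro card_Un_Int) (auto intro: finite_subset)
  ultimately show False
    using assms(4) by simp
qed

lemma robust_est_aligned_dist_le:
  assumes rs: "robust_statistic B rs" and "4 \<le> B" "0 \<le> \<sigma>"
    and agree: "\<And>i. i \<noteq> 1 \<Longrightarrow> X i = Y i"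
    and X_conc: "2 * real B / 3 \<le> real (card {i\<in>{1..B}. X i \<in> linf_ball X' \<sigma>})"
    and Y_conc: "2 * real B / 3 \<le> real (card {i\<in>{1..B}. Y i \<in> linf_ball Y' \<sigma>})"
  shows "infnorm (robust_est B rs X \<sigma> - robust_est B rs Y \<sigma>) \<le> 6 * \<sigma>"
proof -
  define S where "S = {i\<in>{1..B}. X i \<in> linf_ball X' \<sigma>}"
  define S' where "S' = {i\<in>{1..B}. Y i \<in> linf_ball Y' \<sigma>}"
  have "real (card {1..B} + 1) < real (card S + card S')"
    using X_conc Y_conc \<open>4 \<le> B\<close> unfolding S_def S'_def by simp
  moreover have "S \<subseteq> {1..B}" "S' \<subseteq> {1..B}"
    by (auto simp: S_def S'_def)
  ultimately obtain k where "k \<in> S \<inter> S'" "k \<noteq> 1"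
    using exists_common_element_except[of "{1..B}" S S' 1] unfolding of_nat_less_iff by auto
  then have k: "X k \<in> linf_ball X' \<sigma>" "Y k \<in> linf_ball Y' \<sigma>" "X k = Y k"
    using agree unfolding S_def S'_def by auto
  have "rs X \<in> linf_ball X' \<sigma>" "rs Y \<in> linf_ball Y' \<sigma>"
    using X_conc Y_conc \<open>4 \<le> B\<close> by (auto intro!: robust_statistic_majority[OF rs])
  then have "infnorm (rs X - rs Y) \<le> 4 * \<sigma>"
    unfolding infnorm_le_iff_cart
  proof (intro allI)
    fix j
    have "\<bar>(rs X - X') $ j\<bar> \<le> \<sigma>" "\<bar>(X k - X') $ j\<bar> \<le> \<sigma>"
      "\<bar>(Y k - Y') $ j\<bar> \<le> \<sigma>" "\<bar>(rs Y - Y') $ j\<bar> \<le> \<sigma>"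
      using k \<open>rs X \<in> linf_ball X' \<sigma>\<close> \<open>rs Y \<in> linf_ball Y' \<sigma>\<close>
      unfolding linf_ball_def infnorm_le_iff_cart by auto
    then show "\<bar>(rs X - rs Y) $ j\<bar> \<le> 4 * \<sigma>"
      using k(3) by simp
  qed
  then show ?thesis
    using robust_est_dist_le[OF \<open>0 \<le> \<sigma>\<close>, of B rs X Y] by simp
qed

lemma exp_neg_mult_lipschitz:
  fixes \<tau> a b :: real
  assumes "0 \<le> \<tau>" "0 \<le> a" "0 \<le> b"
  shows "\<bar>exp (- \<tau> * a) - exp (- \<tau> * b)\<bar> \<le> \<tau> * \<bar>a - b\<bar>"
proof -
  have ordered: "\<bar>exp (- \<tau> * a) - exp (- \<tau> * b)\<bar> \<le> \<tau> * (b - a)" if "0 \<le> a" "a \<le> b" for a b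
  proof -
    have "exp (- \<tau> * a) - exp (- \<tau> * b) = exp (- \<tau> * a) * (1 - exp (- (\<tau> * (b - a))))"
      by (simp add: algebra_simps flip: exp_add)
    also have "\<dots> \<le> 1 * (\<tau> * (b - a))"
      using assms(1) that exp_ge_add_one_self[of "- (\<tau> * (b - a))"]
      by (intro mult_mono) auto
    finally have "exp (- \<tau> * a) - exp (- \<tau> * b) \<le> \<tau> * (b - a)"
      by simp
    moreover have "exp (- \<tau> * b) \<le> exp (- \<tau> * a)"
      using assms(1) that by (simp add: mult_left_mono)
    ultimately show ?thesis
      by simp
  qed
  show ?thesis
    using ordered[of a b] ordered[of b a] assms by (cases "a \<le> b") (auto simp: abs_minus_commute)
qed

definition pairwise_score :: "nat \<Rightarrow> real \<Rightarrow> (nat \<Rightarrow> real ^ 'n) \<Rightarrow> real" where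
  "pairwise_score B \<tau> Q = (1 / real B) * (\<Sum>i\<in>{1..B}. \<Sum>j\<in>{1..B}. exp (- \<tau> * infnorm (Q i - Q j)))"

lemma s_stat_eq_pairwise_score:
  "s_stat gradf m B rs K \<eta> \<sigma> x0 Z t \<tau>
    = pairwise_score B \<tau> (\<lambda>i. qgrad gradf m (sgd_traj gradf m B rs K \<eta> \<sigma> x0 Z (t - 1)) (Z i t))"
  by (simp add: s_stat_def pairwise_score_def Let_def)

lemma pairwise_score_bounds:
  assumes "1 \<le> B" "0 \<le> \<tau>"
  shows "1 \<le> pairwise_score B \<tau> Q" "pairwise_score B \<tau> Q \<le> real B"
proof -
  have "1 \<le> (\<Sum>j\<in>{1..B}. exp (- \<tau> * infnorm (Q i - Q j)))" if "i \<in> {1..B}" for i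
    using member_le_sum[of i "{1..B}" "\<lambda>j. exp (- \<tau> * infnorm (Q i - Q j))"] that
    by (simp add: infnorm_0)
  then have "(\<Sum>i\<in>{1..B}. 1) \<le> (\<Sum>i\<in>{1..B}. \<Sum>j\<in>{1..B}. exp (- \<tau> * infnorm (Q i - Q j)))"
    by (intro sum_mono)
  moreover have "(\<Sum>i\<in>{1..B}. \<Sum>j\<in>{1..B}. exp (- \<tau> * infnorm (Q i - Q j)))
      \<le> (\<Sum>i\<in>{1..B}. \<Sum>j\<in>{1..B}. 1)"
    using assms(2) by (intro sum_mono) (simp add: infnorm_pos_le)
  ultimately show "1 \<le> pairwise_score B \<tau> Q" "pairwise_score B \<tau> Q \<le> real B"
    using assms(1) by (simp_all add: pairwise_score_def field_simps)
qed

lemma pairwise_score_diff_le: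
  assumes "1 \<le> B" "0 \<le> \<tau>"
  shows "\<bar>pairwise_score B \<tau> P - pairwise_score B \<tau> Q\<bar> \<le> real B - 1"
  using pairwise_score_bounds[OF assms, of P] pairwise_score_bounds[OF assms, of Q] by linarith

lemma pairwise_score_lipschitz:
  assumes "0 \<le> \<tau>" "\<And>i. i \<in> {1..B} \<Longrightarrow> infnorm (P i - Q i) \<le> \<delta>"
  shows "\<bar>pairwise_score B \<tau> P - pairwise_score B \<tau> Q\<bar> \<le> 2 * \<tau> * \<delta> * real B"
proof (cases "B = 0")
  case False
  have summand: "\<bar>exp (- \<tau> * infnorm (P i - P j)) - exp (- \<tau> * infnorm (Q i - Q j))\<bar> \<le> \<tau> * (2 * \<delta>)"
    if "i \<in> {1..B}" "j \<in> {1..B}" for i j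
  proof -
    have "\<bar>infnorm (P i - P j) - infnorm (Q i - Q j)\<bar> \<le> infnorm ((P i - Q i) - (P j - Q j))"
      using absdiff_infnorm[of "P i - P j" "Q i - Q j"] by (simp add: algebra_simps)
    also have "\<dots> \<le> infnorm (P i - Q i) + infnorm (P j - Q j)"
      using infnorm_triangle[of "P i - Q i" "Q j - P j"] infnorm_sub[of "Q j" "P j"]
      by (simp add: diff_diff_eq2 add_diff_eq)
    also have "\<dots> \<le> 2 * \<delta>"
      using assms(2)[OF that(1)] assms(2)[OF that(2)] by linarith
    finally have "\<bar>infnorm (P i - P j) - infnorm (Q i - Q j)\<bar> \<le> 2 * \<delta>" .
    with assms(1) show ?thesis
      by (intro order_trans[OF exp_neg_mult_lipschitz] mult_left_mono) (auto simp: infnorm_pos_le)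
  qed
  have "\<bar>(\<Sum>i\<in>{1..B}. \<Sum>j\<in>{1..B}. exp (- \<tau> * infnorm (P i - P j)) - exp (- \<tau> * infnorm (Q i - Q j)))\<bar>
      \<le> (\<Sum>i\<in>{1..B}. \<Sum>j\<in>{1..B}. \<tau> * (2 * \<delta>))"
    by (intro order_trans[OF sum_abs] sum_mono order_trans[OF sum_abs] summand) auto
  then show ?thesis
    using False by (simp add: pairwise_score_def sum_subtractf abs_mult field_simps)
qed (simp add: pairwise_score_def)

locale sgdsub =
  fixes f :: "real ^ 'd \<Rightarrow> 'z \<Rightarrow> real"
    and gradf :: "real ^ 'd \<Rightarrow> 'z \<Rightarrow> real ^ 'd"
    and hess :: "real ^ 'd \<Rightarrow> 'z \<Rightarrow> real ^ 'd ^ 'd"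
    and \<beta> :: real and m B :: nat and rs :: "(nat \<Rightarrow> real ^ 'd) \<Rightarrow> real ^ 'd"
    and c :: "real ^ 'd" and r \<eta> \<sigma> :: real
  assumes grad: "\<And>x z. ((\<lambda>y. f y z) has_derivative (\<lambda>h. gradf x z \<bullet> h)) (at x)"
    and hessian: "\<And>x z. ((\<lambda>y. gradf y z) has_derivative (\<lambda>h. hess x z *v h)) (at x)"
    and convex: "\<And>z. convex_on UNIV (\<lambda>y. f y z)"
    and smooth: "\<And>x z. mat_inf_norm (hess x z) \<le> \<beta>"
    and diagdom: "\<And>x z. diag_dominant (hess x z)"
    and m_pos: "1 \<le> m" and B_pos: "1 \<le> B" and rs: "robust_statistic B rs"
    and beta_nonneg: "0 \<le> \<beta>" and r_nonneg: "0 \<le> r" and eta_nonneg: "0 \<le> \<eta>" and eta_beta: "\<eta> * \<beta> \<le> 1"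
    and sigma_nonneg: "0 \<le> \<sigma>"
begin

abbreviation traj :: "real ^ 'd \<Rightarrow> (nat \<Rightarrow> nat \<Rightarrow> nat \<Rightarrow> 'z) \<Rightarrow> nat \<Rightarrow> real ^ 'd" where
  "traj \<equiv> sgd_traj gradf m B rs (linf_ball c r) \<eta> \<sigma>"

lemma qgrad_infnorm_lipschitz:
  "infnorm (qgrad gradf m y U - qgrad gradf m x U) \<le> \<beta> * infnorm (y - x)"
proof -
  have "qgrad gradf m y U - qgrad gradf m x U
      = (1 / real (card {..<m})) *\<^sub>R (\<Sum>k<m. gradf y (U k) - gradf x (U k))"
    by (simp add: qgrad_def sum_subtractf scaleR_diff_right)
  also have "infnorm \<dots> \<le> \<beta> * infnorm (y - x)"
    using m_pos gradient_lipschitz_infnorm[OF hessian smooth]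
    by (intro infnorm_mean_le) (auto simp: lessThan_empty_iff)
  finally show ?thesis .
qed

lemma qgrad_step_infnorm_le:
  "infnorm ((y - \<eta> *\<^sub>R qgrad gradf m y U) - (x - \<eta> *\<^sub>R qgrad gradf m x U)) \<le> infnorm (y - x)"
proof -
  have "(\<Sum>k<m. (y - \<eta> *\<^sub>R gradf y (U k)) - (x - \<eta> *\<^sub>R gradf x (U k)))
      = real m *\<^sub>R (y - x) - \<eta> *\<^sub>R ((\<Sum>k<m. gradf y (U k)) - (\<Sum>k<m. gradf x (U k)))"
    by (simp add: sum_subtractf sum_constant_scaleR del: sum_constant flip: scaleR_sum_right)
      (simp add: algebra_simps)
  then have "(y - \<eta> *\<^sub>R qgrad gradf m y U) - (x - \<eta> *\<^sub>R qgrad gradf m x U)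
      = (1 / real (card {..<m})) *\<^sub>R (\<Sum>k<m. (y - \<eta> *\<^sub>R gradf y (U k)) - (x - \<eta> *\<^sub>R gradf x (U k)))"
    using m_pos unfolding card_lessThan by (simp add: qgrad_def scaleR_diff_right)
  also have "infnorm \<dots> \<le> infnorm (y - x)"
    using m_pos eta_nonneg eta_beta gradient_step_infnorm_le[OF grad hessian convex smooth diagdom]
    by (intro infnorm_mean_le) (auto simp: lessThan_empty_iff)
  finally show ?thesis .
qed

lemma traj_Suc_infnorm_le:
  assumes "\<And>i. Z i (Suc n) = Z' i (Suc n)"
  shows "infnorm (traj x0 Z (Suc n) - traj x0' Z' (Suc n)) \<le> infnorm (traj x0 Z n - traj x0' Z' n)"
proof -
  define x where "x = traj x0 Z n"
  define y where "y = traj x0' Z' n"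
  define U where "U i = Z i (Suc n)" for i
  have "infnorm ((x - \<eta> *\<^sub>R robust_est B rs (\<lambda>i. qgrad gradf m x (U i)) \<sigma>)
      - (y - \<eta> *\<^sub>R robust_est B rs (\<lambda>i. qgrad gradf m y (U i)) \<sigma>)) \<le> infnorm (x - y)"
    by (rule robust_est_step_infnorm_le[OF rs B_pos eta_nonneg sigma_nonneg])
      (rule qgrad_step_infnorm_le)
  then show ?thesis
    using assms unfolding sgd_traj.simps Let_def x_def[symmetric] y_def[symmetric]
    by (simp add: U_def order_trans[OF closest_point_linf_ball_infnorm_le[OF r_nonneg]])
qed

lemma traj_infnorm_le:
  assumes "\<And>i t. k < t \<Longrightarrow> Z i t = Z' i t" "k \<le> n"
  shows "infnorm (traj x0 Z n - traj x0' Z' n) \<le> infnorm (traj x0 Z k - traj x0' Z' k)"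
  using assms(2)
proof (induction n rule: dec_induct)
  case (step n)
  then show ?case
    using assms(1) by (intro order_trans[OF traj_Suc_infnorm_le]) auto
qed simp

lemma traj_1_aligned_dist_le:
  assumes "4 \<le> B" "\<And>i. i \<noteq> 1 \<Longrightarrow> Z i 1 = Z' i 1"
    and "2 * real B / 3 \<le> real (card {i\<in>{1..B}. qgrad gradf m x0 (Z i 1) \<in> linf_ball X' \<sigma>})"
    and "2 * real B / 3 \<le> real (card {i\<in>{1..B}. qgrad gradf m x0 (Z' i 1) \<in> linf_ball Y' \<sigma>})"
  shows "infnorm (traj x0 Z 1 - traj x0 Z' 1) \<le> 6 * \<eta> * \<sigma>"
proof -
  define g where "g = robust_est B rs (\<lambda>i. qgrad gradf m x0 (Z i 1)) \<sigma>"
  define g' where "g' = robust_est B rs (\<lambda>i. qgrad gradf m x0 (Z' i 1)) \<sigma>"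
  have "infnorm (traj x0 Z 1 - traj x0 Z' 1) \<le> infnorm ((x0 - \<eta> *\<^sub>R g) - (x0 - \<eta> *\<^sub>R g'))"
    unfolding g_def g'_def One_nat_def sgd_traj.simps Let_def
    by (rule closest_point_linf_ball_infnorm_le[OF r_nonneg])
  also have "\<dots> = \<eta> * infnorm (g - g')"
    using eta_nonneg infnorm_mul[of \<eta> "g' - g"] by (simp add: algebra_simps infnorm_sub)
  also have "\<dots> \<le> \<eta> * (6 * \<sigma>)"
    unfolding g_def g'_def using assms eta_nonneg
    by (intro mult_left_mono robust_est_aligned_dist_le[OF rs _ sigma_nonneg]) auto
  finally show ?thesis
    by simp
qed

lemma qgrad_aligned_dist_le:
  assumes "4 \<le> B" "2 \<le> t" "\<And>i t. (i, t) \<noteq> (1, 1) \<Longrightarrow> Z i t = Z' i t"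
    and "2 * real B / 3 \<le> real (card {i\<in>{1..B}. qgrad gradf m x0 (Z i 1) \<in> linf_ball X' \<sigma>})"
    and "2 * real B / 3 \<le> real (card {i\<in>{1..B}. qgrad gradf m x0 (Z' i 1) \<in> linf_ball Y' \<sigma>})"
  shows "infnorm (qgrad gradf m (traj x0 Z (t - 1)) (Z i t)
      - qgrad gradf m (traj x0 Z' (t - 1)) (Z' i t)) \<le> \<beta> * (6 * \<eta> * \<sigma>)"
proof -
  have "Z' i t = Z i t"
    using assms(2) assms(3)[of i t] by auto
  then have "infnorm (qgrad gradf m (traj x0 Z (t - 1)) (Z i t)
      - qgrad gradf m (traj x0 Z' (t - 1)) (Z' i t))
      \<le> \<beta> * infnorm (traj x0 Z (t - 1) - traj x0 Z' (t - 1))"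
    by (simp add: qgrad_infnorm_lipschitz)
  also have "\<dots> \<le> \<beta> * infnorm (traj x0 Z 1 - traj x0 Z' 1)"
    using assms(2,3) beta_nonneg by (intro mult_left_mono traj_infnorm_le) auto
  also have "\<dots> \<le> \<beta> * (6 * \<eta> * \<sigma>)"
    using assms beta_nonneg by (intro mult_left_mono traj_1_aligned_dist_le) auto
  finally show ?thesis .
qed

lemma pairwise_score_aligned_diff_le:
  assumes "4 \<le> B" "2 \<le> t" "0 \<le> \<tau>" "\<And>i t. (i, t) \<noteq> (1, 1) \<Longrightarrow> Z i t = Z' i t"
    and "2 * real B / 3 \<le> real (card {i\<in>{1..B}. qgrad gradf m x0 (Z i 1) \<in> linf_ball X' \<sigma>})"
    and "2 * real B / 3 \<le> real (card {i\<in>{1..B}. qgrad gradf m x0 (Z' i 1) \<in> linf_ball Y' \<sigma>})"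
  shows "\<bar>pairwise_score B \<tau> (\<lambda>i. qgrad gradf m (traj x0 Z (t - 1)) (Z i t))
      - pairwise_score B \<tau> (\<lambda>i. qgrad gradf m (traj x0 Z' (t - 1)) (Z' i t))\<bar>
    \<le> 2 * \<tau> * (\<beta> * (6 * \<eta> * \<sigma>)) * real B"
  using assms by (intro pairwise_score_lipschitz qgrad_aligned_dist_le) auto

end

theorem lemma3p9:
  fixes f :: "real ^ 'd \<Rightarrow> 'z \<Rightarrow> real"
    and gradf :: "real ^ 'd \<Rightarrow> 'z \<Rightarrow> real ^ 'd"
    and hess :: "real ^ 'd \<Rightarrow> 'z \<Rightarrow> real ^ 'd ^ 'd"
    and c x0 :: "real ^ 'd" and r \<beta> \<eta> \<tau> :: real
    and B m T :: nat
    and rs :: "(nat \<Rightarrow> real ^ 'd) \<Rightarrow> real ^ 'd"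
    and Z1 Z2 :: "nat \<Rightarrow> nat \<Rightarrow> nat \<Rightarrow> 'z"
  assumes r_nonneg: "0 \<le> r"
    and x0_in: "x0 \<in> linf_ball c r"
    and B_pos: "1 \<le> B" and m_pos: "1 \<le> m"
    and beta_nonneg: "0 \<le> \<beta>" and eta_pos: "0 < \<eta>" and tau_pos: "0 < \<tau>"
    and grad: "\<And>x z. ((\<lambda>y. f y z) has_derivative (\<lambda>h. gradf x z \<bullet> h)) (at x)"
    and hessian: "\<And>x z. ((\<lambda>y. gradf y z) has_derivative (\<lambda>h. hess x z *v h)) (at x)"
    and convex: "\<And>z. convex_on UNIV (\<lambda>y. f y z)"
    and smooth: "\<And>x z. mat_inf_norm (hess x z) \<le> \<beta>"
    and diagdom: "\<And>x z. diag_dominant (hess x z)"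
    and rs: "robust_statistic B rs"
    and differ: "\<And>i t. (i, t) \<noteq> (1, 1) \<Longrightarrow> Z1 i t = Z2 i t"
    and step: "6 * \<beta> * \<eta> * real B \<le> 1"
    and aligned: "\<exists>X' Y'.
        real (card {i\<in>{1..B}. qgrad gradf m x0 (Z1 i 1) \<in> linf_ball X' (1 / \<tau>)}) \<ge> 2 * real B / 3 \<and>
        real (card {i\<in>{1..B}. qgrad gradf m x0 (Z2 i 1) \<in> linf_ball Y' (1 / \<tau>)}) \<ge> 2 * real B / 3"
  shows "\<forall>t\<in>{2..T}.
     \<bar>s_stat gradf m B rs (linf_ball c r) \<eta> (1 / \<tau>) x0 Z1 t \<tau>
      - s_stat gradf m B rs (linf_ball c r) \<eta> (1 / \<tau>) x0 Z2 t \<tau>\<bar> \<le> 2"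
proof
  fix t assume "t \<in> {2..T}"
  have "\<eta> * \<beta> * 1 \<le> \<eta> * \<beta> * real B"
    using B_pos eta_pos beta_nonneg by (intro mult_left_mono) auto
  then have "\<eta> * \<beta> \<le> 1"
    using step by (simp add: algebra_simps)
  then interpret sgdsub f gradf hess \<beta> m B rs c r \<eta> "1 / \<tau>"
    by unfold_locales (use assms in auto)
  show "\<bar>s_stat gradf m B rs (linf_ball c r) \<eta> (1 / \<tau>) x0 Z1 t \<tau>
      - s_stat gradf m B rs (linf_ball c r) \<eta> (1 / \<tau>) x0 Z2 t \<tau>\<bar> \<le> 2"
  proof (cases "B \<le> 3")
    case True
    show ?thesis
      unfolding s_stat_eq_pairwise_score
      by (rule order_trans[OF pairwise_score_diff_le]) (use B_pos tau_pos True in auto)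
  next
    case False
    obtain X' Y' where
      "2 * real B / 3 \<le> real (card {i\<in>{1..B}. qgrad gradf m x0 (Z1 i 1) \<in> linf_ball X' (1 / \<tau>)})"
      "2 * real B / 3 \<le> real (card {i\<in>{1..B}. qgrad gradf m x0 (Z2 i 1) \<in> linf_ball Y' (1 / \<tau>)})"
      using aligned by blast
    then have "\<bar>pairwise_score B \<tau> (\<lambda>i. qgrad gradf m (traj x0 Z1 (t - 1)) (Z1 i t))
        - pairwise_score B \<tau> (\<lambda>i. qgrad gradf m (traj x0 Z2 (t - 1)) (Z2 i t))\<bar>
      \<le> 2 * \<tau> * (\<beta> * (6 * \<eta> * (1 / \<tau>))) * real B"
      using False \<open>t \<in> {2..T}\<close> tau_pos differ by (intro pairwise_score_aligned_diff_le) auto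
    then show ?thesis
      unfolding s_stat_eq_pairwise_score using tau_pos step by simp
  qed
qed

end
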